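(* Let $\mathbf{F}$ be a regular $1$-independent normed space of functions over a set $X$, let $\omega_1,\dots,\omega_n\in Mult(\mathbf{F})$ and $\vec\omega=(\omega_1,\dots,\omega_n):X\to\mathbb{C}^n$. Let $Y\subset\mathbb{C}^n$ be a bounded domain such that the polynomials are dense in $A(Y)$ with respect to $\sup_{\overline Y}|\cdot|$, and the closure of the open unit ball of the polynomials (sup norm on $Y$) in the topology of pointwise convergence on $Y$ equals the closed unit ball of $H_\infty(Y)$. Assume $\vec\omega(X)\subset\overline{Y}$, and that $C_{\vec\omega}:p\mapsto p\circ\vec\omega$ maps the polynomials into $Mult(\mathbf{F})$ and is bounded with respect to the norm $\sup_{\overline{Y}}|p|$. Then: (i) $C_{\vec\omega}$ maps $A(Y)$ (its elements viewed as continuous functions on $\overline Y$) boundedly into $Mult(\mathbf{F})$; (ii) if additionally $\vec\omega(X)\subset Y$, then $C_{\vec\omega}$ maps $H_\infty(Y)$ boundedly into $Mult(\mathbf{F})$.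
   Context: A normed space of functions over a set $X$ is a linear subspace of the space of all functions $X\to\mathbb{C}$ with a norm for which point evaluations are bounded; it is $1$-independent if for each $x$ some $f\in\mathbf{F}$ has $f(x)\ne0$, and regular if its closed unit ball is closed in the topology of pointwise convergence on $X$. $Mult(\mathbf{F})$ is the set of $\omega:X\to\mathbb{C}$ with $\omega f\in\mathbf{F}$ for all $f\in\mathbf{F}$ and $f\mapsto\omega f$ bounded, normed by the operator norm. $H_\infty(Y)$ is the space of bounded holomorphic functions on $Y$ with the sup norm; $A(Y)$ is its closed subspace of functions extending continuously to $\overline Y$. *)

theory Defs
  imports "HOL-Analysis.Analysis"
begin

text \<open>Functions on a set X are represented as functions on the ambient type that vanish
outside X (extensional convention). The topology of pointwise convergence is then the
product topology on type 'a \<Rightarrow> complex restricted to this closed set.\<close>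

definition ext_on :: "'a set \<Rightarrow> ('a \<Rightarrow> complex) set" where
  "ext_on X = {f. \<forall>x. x \<notin> X \<longrightarrow> f x = 0}"

definition normed_fun_space :: "'a set \<Rightarrow> ('a \<Rightarrow> complex) set \<Rightarrow> (('a \<Rightarrow> complex) \<Rightarrow> real) \<Rightarrow> bool" where
  "normed_fun_space X F N \<longleftrightarrow>
     F \<subseteq> ext_on X \<and>
     (\<lambda>x. 0) \<in> F \<and>
     (\<forall>f\<in>F. \<forall>g\<in>F. (\<lambda>x. f x + g x) \<in> F) \<and>
     (\<forall>c. \<forall>f\<in>F. (\<lambda>x. c * f x) \<in> F) \<and>
     (\<forall>f\<in>F. 0 \<le> N f) \<and>
     (\<forall>f\<in>F. N f = 0 \<longleftrightarrow> f = (\<lambda>x. 0)) \<and>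
     (\<forall>c. \<forall>f\<in>F. N (\<lambda>x. c * f x) = cmod c * N f) \<and>
     (\<forall>f\<in>F. \<forall>g\<in>F. N (\<lambda>x. f x + g x) \<le> N f + N g) \<and>
     (\<forall>x\<in>X. \<exists>C. \<forall>f\<in>F. cmod (f x) \<le> C * N f)"

definition one_independent :: "'a set \<Rightarrow> ('a \<Rightarrow> complex) set \<Rightarrow> bool" where
  "one_independent X F \<longleftrightarrow> (\<forall>x\<in>X. \<exists>f\<in>F. f x \<noteq> 0)"

definition regular_fun_space :: "('a \<Rightarrow> complex) set \<Rightarrow> (('a \<Rightarrow> complex) \<Rightarrow> real) \<Rightarrow> bool" where
  "regular_fun_space F N \<longleftrightarrow> closed {f \<in> F. N f \<le> 1}"

definition Mult :: "('a \<Rightarrow> complex) set \<Rightarrow> (('a \<Rightarrow> complex) \<Rightarrow> real) \<Rightarrow> ('a \<Rightarrow> complex) set" where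
  "Mult F N = {w. (\<forall>f\<in>F. (\<lambda>x. w x * f x) \<in> F) \<and>
                  (\<exists>C. \<forall>f\<in>F. N (\<lambda>x. w x * f x) \<le> C * N f)}"

definition mult_norm :: "('a \<Rightarrow> complex) set \<Rightarrow> (('a \<Rightarrow> complex) \<Rightarrow> real) \<Rightarrow> ('a \<Rightarrow> complex) \<Rightarrow> real" where
  "mult_norm F N w = Inf {C. 0 \<le> C \<and> (\<forall>f\<in>F. N (\<lambda>x. w x * f x) \<le> C * N f)}"

definition polynomial_fun :: "(complex ^ 'n \<Rightarrow> complex) \<Rightarrow> bool" where
  "polynomial_fun p \<longleftrightarrow> (\<exists>S :: ('n \<Rightarrow> nat) set. \<exists>c. finite S \<and>
      p = (\<lambda>z. \<Sum>\<alpha>\<in>S. c \<alpha> * (\<Prod>i\<in>UNIV. (z $ i) ^ \<alpha> i)))"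

definition holomorphic_n :: "(complex ^ 'n \<Rightarrow> complex) \<Rightarrow> (complex ^ 'n) set \<Rightarrow> bool" where
  "holomorphic_n f Y \<longleftrightarrow> (\<forall>z\<in>Y. \<exists>L. (f has_derivative L) (at z) \<and>
      (\<forall>c v. L (c *s v) = c * L v))"

definition domain_n :: "(complex ^ 'n) set \<Rightarrow> bool" where
  "domain_n Y \<longleftrightarrow> open Y \<and> connected Y \<and> Y \<noteq> {}"

definition sup_on :: "'b set \<Rightarrow> ('b \<Rightarrow> complex) \<Rightarrow> real" where
  "sup_on S f = (SUP z\<in>S. cmod (f z))"

definition restrict0 :: "'b set \<Rightarrow> ('b \<Rightarrow> complex) \<Rightarrow> ('b \<Rightarrow> complex)" where
  "restrict0 S f = (\<lambda>z. if z \<in> S then f z else 0)"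

definition H_inf :: "(complex ^ 'n) set \<Rightarrow> (complex ^ 'n \<Rightarrow> complex) set" where
  "H_inf Y = {f. f \<in> ext_on Y \<and> holomorphic_n f Y \<and> bounded (f ` Y)}"

end

theory Submission
  imports Defs
begin

text \<open>For h \<in> F the map v \<mapsto> v h is continuous for pointwise convergence, and by
regularity the norm balls of F are closed in that topology. Hence a limit, pointwise on X,
of multipliers of norm at most K is again a multiplier of norm at most K. In (i) f is a
uniform, hence pointwise, limit on closure Y \<supseteq> w(X) of polynomials whose sup norms
approach that of f. In (ii) f, divided by its sup norm and cut off outside Y, lies in the
pointwise closure of the polynomials of sup norm less than 1 on Y, and w(X) \<subseteq> Y lets
us compose these with w.\<close>

lemma normed_fun_spaceD:
  assumes "normed_fun_space X F N"
  shows "F \<subseteq> ext_on X" "(\<lambda>x. 0) \<in> F"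
    "\<And>c f. f \<in> F \<Longrightarrow> (\<lambda>x. c * f x) \<in> F"
    "\<And>f. f \<in> F \<Longrightarrow> 0 \<le> N f"
    "\<And>f. f \<in> F \<Longrightarrow> N f = 0 \<longleftrightarrow> f = (\<lambda>x. 0)"
    "\<And>c f. f \<in> F \<Longrightarrow> N (\<lambda>x. c * f x) = cmod c * N f"
  using assms unfolding normed_fun_space_def by blast+

lemma normed_fun_space_vanishes:
  "normed_fun_space X F N \<Longrightarrow> f \<in> F \<Longrightarrow> x \<notin> X \<Longrightarrow> f x = 0"
  using normed_fun_spaceD(1) unfolding ext_on_def by blast

lemma tendsto_fun_pointwise:
  fixes f :: "'i \<Rightarrow> 'b \<Rightarrow> 'c::topological_space"
  assumes "\<And>x. ((\<lambda>k. f k x) \<longlongrightarrow> l x) G"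
  shows "(f \<longlongrightarrow> l) G"
proof -
  have "limitin (product_topology (\<lambda>i. euclidean) UNIV) f l G"
    using assms by (simp add: limitin_componentwise)
  then show ?thesis by (simp add: euclidean_product_topology)
qed

lemma Mult_bound_nonneg:
  assumes "normed_fun_space X F N" "v \<in> Mult F N"
  obtains C where "0 \<le> C" "\<forall>f\<in>F. N (\<lambda>x. v x * f x) \<le> C * N f"
proof -
  obtain C where C: "\<forall>f\<in>F. N (\<lambda>x. v x * f x) \<le> C * N f"
    using assms(2) unfolding Mult_def by blast
  have "\<forall>f\<in>F. N (\<lambda>x. v x * f x) \<le> max C 0 * N f"
    using C normed_fun_spaceD(4)[OF assms(1)] by (metis max.cobounded1 mult_right_mono order_trans)
  then show ?thesis by (rule that[rotated]) simp
qed

lemma mult_norm_nonneg: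
  assumes "normed_fun_space X F N" "v \<in> Mult F N"
  shows "0 \<le> mult_norm F N v"
proof -
  obtain C where "0 \<le> C" "\<forall>f\<in>F. N (\<lambda>x. v x * f x) \<le> C * N f"
    using Mult_bound_nonneg[OF assms] .
  then show ?thesis unfolding mult_norm_def by (intro cInf_greatest) auto
qed

lemma mult_norm_bound:
  assumes nfs: "normed_fun_space X F N" and v: "v \<in> Mult F N" and g: "g \<in> F"
  shows "N (\<lambda>x. v x * g x) \<le> mult_norm F N v * N g"
proof (cases "N g = 0")
  case True
  then have "g = (\<lambda>x. 0)" using normed_fun_spaceD(5)[OF nfs g] by simp
  then show ?thesis using normed_fun_spaceD(5)[OF nfs normed_fun_spaceD(2)[OF nfs]] by simp
next
  case False
  then have pos: "N g > 0" using normed_fun_spaceD(4)[OF nfs g] by simp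
  obtain C where "0 \<le> C" "\<forall>f\<in>F. N (\<lambda>x. v x * f x) \<le> C * N f"
    using Mult_bound_nonneg[OF nfs v] .
  then have "N (\<lambda>x. v x * g x) / N g \<le> mult_norm F N v"
    unfolding mult_norm_def using g pos by (intro cInf_greatest) (auto simp: pos_divide_le_eq)
  then show ?thesis using pos by (simp add: pos_divide_le_eq)
qed

lemma Mult_mult_norm_leI:
  assumes "\<forall>h\<in>F. (\<lambda>x. v x * h x) \<in> F \<and> N (\<lambda>x. v x * h x) \<le> K * N h" "0 \<le> K"
  shows "v \<in> Mult F N \<and> mult_norm F N v \<le> K"
proof
  show "v \<in> Mult F N" using assms(1) unfolding Mult_def by blast
  show "mult_norm F N v \<le> K"
    unfolding mult_norm_def using assms by (intro cInf_lower bdd_belowI[of _ 0]) auto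
qed

lemma Mult_cong_on:
  assumes "normed_fun_space X F N" "\<forall>x\<in>X. u x = v x"
  shows "u \<in> Mult F N \<longleftrightarrow> v \<in> Mult F N" "mult_norm F N u = mult_norm F N v"
proof -
  have "(\<lambda>x. u x * h x) = (\<lambda>x. v x * h x)" if "h \<in> F" for h
    using assms normed_fun_space_vanishes[OF assms(1) that] by fastforce
  then show "u \<in> Mult F N \<longleftrightarrow> v \<in> Mult F N" "mult_norm F N u = mult_norm F N v"
    unfolding Mult_def mult_norm_def by simp_all
qed

lemma Mult_cmult:
  assumes nfs: "normed_fun_space X F N" and v: "v \<in> Mult F N"
  shows "(\<lambda>x. c * v x) \<in> Mult F N \<and> mult_norm F N (\<lambda>x. c * v x) \<le> cmod c * mult_norm F N v"
proof (rule Mult_mult_norm_leI)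
  show "\<forall>h\<in>F. (\<lambda>x. c * v x * h x) \<in> F \<and> N (\<lambda>x. c * v x * h x) \<le> cmod c * mult_norm F N v * N h"
  proof
    fix h assume h: "h \<in> F"
    have vh: "(\<lambda>x. v x * h x) \<in> F" using v h unfolding Mult_def by blast
    have "N (\<lambda>x. c * (v x * h x)) = cmod c * N (\<lambda>x. v x * h x)"
      using normed_fun_spaceD(6)[OF nfs vh] .
    also have "\<dots> \<le> cmod c * (mult_norm F N v * N h)"
      using mult_norm_bound[OF nfs v h] by (simp add: mult_left_mono)
    finally show "(\<lambda>x. c * v x * h x) \<in> F \<and> N (\<lambda>x. c * v x * h x) \<le> cmod c * mult_norm F N v * N h"
      using normed_fun_spaceD(3)[OF nfs vh, of c] by (simp add: mult.assoc)
  qed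
  show "0 \<le> cmod c * mult_norm F N v" using mult_norm_nonneg[OF nfs v] by simp
qed

lemma closed_norm_ball:
  assumes nfs: "normed_fun_space X F N" and reg: "regular_fun_space F N" and r: "0 \<le> r"
  shows "closed {k\<in>F. N k \<le> r}"
proof -
  have closed_pos: "closed {k\<in>F. N k \<le> t}" if t: "0 < t" for t
  proof -
    define c where "c = complex_of_real (1 / t)"
    have c: "cmod c = 1 / t" "complex_of_real t * c = 1" using t by (auto simp: c_def norm_divide)
    let ?scale = "\<lambda>k x. c * k x"
    have ball_eq: "{k\<in>F. N k \<le> t} = ?scale -` {f \<in> F. N f \<le> 1}"
    proof (intro set_eqI iffI)
      fix k assume k: "k \<in> {k\<in>F. N k \<le> t}"
      then have "N (?scale k) \<le> 1"
        using normed_fun_spaceD(6)[OF nfs, of k c] c t by (simp add: divide_le_eq)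
      then show "k \<in> ?scale -` {f \<in> F. N f \<le> 1}" using k normed_fun_spaceD(3)[OF nfs] by simp
    next
      fix k assume "k \<in> ?scale -` {f \<in> F. N f \<le> 1}"
      then have k: "?scale k \<in> F" "N (?scale k) \<le> 1" by auto
      have k_eq: "k = (\<lambda>x. complex_of_real t * ?scale k x)"
        using c(2) by (simp add: mult.assoc[symmetric])
      have "k \<in> F" by (subst k_eq) (rule normed_fun_spaceD(3)[OF nfs k(1)])
      moreover have "N k = t * N (?scale k)"
        by (subst k_eq, subst normed_fun_spaceD(6)[OF nfs k(1)]) (use t in simp)
      ultimately show "k \<in> {k\<in>F. N k \<le> t}" using k(2) t by (simp add: mult_le_cancel_left1)
    qed
    have "continuous_on UNIV ?scale"
      by (intro continuous_on_coordinatewise_then_product continuous_on_mult_left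
          continuous_on_product_coordinates)
    then show ?thesis
      unfolding ball_eq using reg unfolding regular_fun_space_def by (rule closed_vimage[rotated])
  qed
  have "{k\<in>F. N k \<le> r} = (\<Inter>d\<in>{0<..}. {k\<in>F. N k \<le> r + d})"
    by (auto intro: field_le_epsilon) (meson greaterThan_iff zero_less_one)
  then show ?thesis using r by (auto intro!: closed_pos)
qed

lemma Mult_tendsto_pointwise:
  fixes v :: "'i \<Rightarrow> 'a \<Rightarrow> complex"
  assumes nfs: "normed_fun_space X F N" and reg: "regular_fun_space F N"
    and K: "0 \<le> K" and G: "G \<noteq> bot"
    and lim: "\<forall>x\<in>X. ((\<lambda>k. v k x) \<longlongrightarrow> u x) G"
    and bound: "eventually (\<lambda>k. v k \<in> Mult F N \<and> mult_norm F N (v k) \<le> K) G"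
  shows "u \<in> Mult F N \<and> mult_norm F N u \<le> K"
proof (rule Mult_mult_norm_leI[OF _ K], intro ballI)
  fix h assume h: "h \<in> F"
  have "(\<lambda>x. u x * h x) \<in> {g\<in>F. N g \<le> K * N h}"
  proof (rule Lim_in_closed_set[OF closed_norm_ball[OF nfs reg] _ G])
    show "0 \<le> K * N h" using K normed_fun_spaceD(4)[OF nfs h] by simp
    show "eventually (\<lambda>k. (\<lambda>x. v k x * h x) \<in> {g\<in>F. N g \<le> K * N h}) G"
    proof (rule eventually_mono[OF bound], safe)
      fix k assume vk: "v k \<in> Mult F N" and vk_le: "mult_norm F N (v k) \<le> K"
      show "(\<lambda>x. v k x * h x) \<in> F" using vk h unfolding Mult_def by blast
      have "N (\<lambda>x. v k x * h x) \<le> mult_norm F N (v k) * N h"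
        by (rule mult_norm_bound[OF nfs vk h])
      also have "\<dots> \<le> K * N h"
        using vk_le normed_fun_spaceD(4)[OF nfs h] by (rule mult_right_mono)
      finally show "N (\<lambda>x. v k x * h x) \<le> K * N h" .
    qed
    show "((\<lambda>k x. v k x * h x) \<longlongrightarrow> (\<lambda>x. u x * h x)) G"
    proof (rule tendsto_fun_pointwise)
      fix x
      show "((\<lambda>k. v k x * h x) \<longlongrightarrow> u x * h x) G"
        using lim normed_fun_space_vanishes[OF nfs h, of x]
        by (cases "x \<in> X") (auto intro: tendsto_mult_right)
    qed
  qed
  then show "(\<lambda>x. u x * h x) \<in> F \<and> N (\<lambda>x. u x * h x) \<le> K * N h" by simp
qed

lemma Mult_comp_closure:
  fixes w :: "'a \<Rightarrow> 'b"
  assumes nfs: "normed_fun_space X F N" and reg: "regular_fun_space F N" and K: "0 \<le> K"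
    and S: "\<forall>q\<in>S. q \<circ> w \<in> Mult F N \<and> mult_norm F N (q \<circ> w) \<le> K"
    and g: "g \<in> closure S"
  shows "g \<circ> w \<in> Mult F N \<and> mult_norm F N (g \<circ> w) \<le> K"
proof (cases "g \<in> S")
  case False
  then have "g islimpt S" using g unfolding closure_def by blast
  show ?thesis
  proof (rule Mult_tendsto_pointwise[OF nfs reg K, where G = "at g within S" and v = "\<lambda>q. q \<circ> w"])
    show "at g within S \<noteq> bot" using \<open>g islimpt S\<close> trivial_limit_within by blast
    show "\<forall>x\<in>X. ((\<lambda>q. (q \<circ> w) x) \<longlongrightarrow> (g \<circ> w) x) (at g within S)"
    proof
      fix x
      have "((\<lambda>q. q (w x)) \<longlongrightarrow> g (w x)) (at g)"
        using continuous_on_product_coordinates[of "w x"] unfolding continuous_on_def by blast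
      then show "((\<lambda>q. (q \<circ> w) x) \<longlongrightarrow> (g \<circ> w) x) (at g within S)"
        unfolding comp_def by (rule tendsto_within_subset[OF _ subset_UNIV])
    qed
    show "eventually (\<lambda>q. q \<circ> w \<in> Mult F N \<and> mult_norm F N (q \<circ> w) \<le> K) (at g within S)"
      using S by (auto simp: eventually_at_filter)
  qed
qed (use S in blast)

lemma sup_on_upper:
  assumes "bounded (g ` K)" "z \<in> K"
  shows "cmod (g z) \<le> sup_on K g"
proof -
  obtain B where "\<forall>x\<in>g ` K. norm x \<le> B" using assms(1) bounded_iff by blast
  then have "bdd_above ((\<lambda>z. cmod (g z)) ` K)" by (auto intro: bdd_aboveI2)
  then show ?thesis unfolding sup_on_def using assms(2) by (rule cSUP_upper2) simp
qed

lemma sup_on_least: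
  assumes "K \<noteq> {}" "\<And>z. z \<in> K \<Longrightarrow> cmod (g z) \<le> M"
  shows "sup_on K g \<le> M"
  unfolding sup_on_def using assms by (rule cSUP_least)

lemma sup_on_nonneg:
  assumes "bounded (g ` K)" "K \<noteq> {}"
  shows "0 \<le> sup_on K g"
  using assms sup_on_upper[OF assms(1)] by (meson ex_in_conv norm_ge_zero order_trans)

lemma sup_on_closure_le:
  assumes "continuous_on (closure Y) p" "bounded (p ` Y)" "Y \<noteq> {}"
  shows "sup_on (closure Y) p \<le> sup_on Y p"
proof -
  have "(\<lambda>z. cmod (p z)) ` closure Y \<subseteq> {..sup_on Y p}"
    using sup_on_upper[OF assms(2)]
    by (intro image_closure_subset continuous_on_norm assms(1)) auto
  then show ?thesis using assms(3) by (intro sup_on_least) auto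
qed

lemma continuous_polynomial_fun:
  assumes "polynomial_fun p"
  shows "continuous_on S p"
proof -
  obtain T c where "p = (\<lambda>z. \<Sum>\<alpha>\<in>T. c \<alpha> * (\<Prod>i\<in>UNIV. (z $ i) ^ \<alpha> i))"
    using assms unfolding polynomial_fun_def by blast
  then show ?thesis by (auto intro!: continuous_intros)
qed

lemma bounded_polynomial_image:
  assumes "polynomial_fun p" "bounded K"
  shows "bounded (p ` K)"
proof -
  have "compact (p ` closure K)"
    using assms by (auto intro: compact_continuous_image continuous_polynomial_fun)
  then show ?thesis by (meson bounded_subset closure_subset compact_imp_bounded image_mono)
qed

lemma holomorphic_n_cmult:
  assumes "holomorphic_n f Y"
  shows "holomorphic_n (\<lambda>z. c * f z) Y"
  unfolding holomorphic_n_def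
proof
  fix z assume "z \<in> Y"
  then obtain L where L: "(f has_derivative L) (at z)" "\<forall>a v. L (a *s v) = a * L v"
    using assms unfolding holomorphic_n_def by blast
  have "((\<lambda>z. c * f z) has_derivative (\<lambda>v. c * L v)) (at z)"
    by (rule has_derivative_mult_right[OF L(1)])
  moreover have "\<forall>a v. c * L (a *s v) = a * (c * L v)" using L(2) by simp
  ultimately show "\<exists>L. ((\<lambda>z. c * f z) has_derivative L) (at z) \<and> (\<forall>a v. L (a *s v) = a * L v)"
    by blast
qed

lemma holomorphic_n_restrict0:
  assumes "holomorphic_n f Y" "open Y"
  shows "holomorphic_n (restrict0 Y f) Y"
  unfolding holomorphic_n_def
proof
  fix z assume z: "z \<in> Y"
  then obtain L where L: "(f has_derivative L) (at z)" "\<forall>a v. L (a *s v) = a * L v"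
    using assms unfolding holomorphic_n_def by blast
  have "(restrict0 Y f has_derivative L) (at z)"
    by (rule has_derivative_transform_within_open[OF L(1) assms(2) z]) (simp add: restrict0_def)
  then show "\<exists>L. (restrict0 Y f has_derivative L) (at z) \<and> (\<forall>a v. L (a *s v) = a * L v)"
    using L(2) by blast
qed

lemma polynomial_comp_bound_nonneg:
  fixes w :: "'a \<Rightarrow> complex ^ 'n"
  assumes Y: "bounded Y" "Y \<noteq> {}"
    and C_poly: "\<forall>p. polynomial_fun p \<longrightarrow> p \<circ> w \<in> Mult F N"
    and C_bdd: "\<exists>C. \<forall>p. polynomial_fun p \<longrightarrow> mult_norm F N (p \<circ> w) \<le> C * sup_on (closure Y) p"
  obtains C where "0 \<le> C" "\<forall>p. polynomial_fun p \<longrightarrow>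
      p \<circ> w \<in> Mult F N \<and> mult_norm F N (p \<circ> w) \<le> C * sup_on (closure Y) p"
proof -
  obtain C0 where C0: "\<forall>p. polynomial_fun p \<longrightarrow> mult_norm F N (p \<circ> w) \<le> C0 * sup_on (closure Y) p"
    using C_bdd by blast
  have "\<forall>p. polynomial_fun p \<longrightarrow>
          p \<circ> w \<in> Mult F N \<and> mult_norm F N (p \<circ> w) \<le> max C0 0 * sup_on (closure Y) p"
  proof (intro allI impI conjI)
    fix p :: "complex ^ 'n \<Rightarrow> complex" assume p: "polynomial_fun p"
    show "p \<circ> w \<in> Mult F N" using C_poly p by blast
    have "0 \<le> sup_on (closure Y) p"
      using Y by (intro sup_on_nonneg bounded_polynomial_image[OF p]) auto
    then have "C0 * sup_on (closure Y) p \<le> max C0 0 * sup_on (closure Y) p"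
      by (rule mult_right_mono[OF max.cobounded1])
    then show "mult_norm F N (p \<circ> w) \<le> max C0 0 * sup_on (closure Y) p"
      using C0 p by (blast intro: order_trans)
  qed
  then show ?thesis by (rule that[rotated]) simp
qed

lemma Mult_comp_uniform_limit:
  fixes f :: "'b \<Rightarrow> complex" and w :: "'a \<Rightarrow> 'b"
  assumes nfs: "normed_fun_space X F N" and reg: "regular_fun_space F N"
    and K: "K \<noteq> {}" "bounded (f ` K)" and w: "w ` X \<subseteq> K" and C: "0 \<le> C"
    and A: "\<forall>p\<in>A. p \<circ> w \<in> Mult F N \<and> mult_norm F N (p \<circ> w) \<le> C * sup_on K p"
    and approx: "\<forall>\<epsilon>>0. \<exists>p\<in>A. \<forall>z\<in>K. cmod (f z - p z) < \<epsilon>"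
  shows "f \<circ> w \<in> Mult F N \<and> mult_norm F N (f \<circ> w) \<le> C * sup_on K f"
proof -
  have s: "0 \<le> sup_on K f" using sup_on_nonneg[OF K(2,1)] .
  have near: "f \<circ> w \<in> Mult F N \<and> mult_norm F N (f \<circ> w) \<le> C * (sup_on K f + d)"
    if d: "0 < d" for d
  proof -
    have "\<exists>p\<in>A. \<forall>z\<in>K. cmod (f z - p z) < min d (inverse (real (Suc k)))" for k
    proof -
      have "0 < min d (inverse (real (Suc k)))" using d by simp
      then show ?thesis using approx by blast
    qed
    then obtain P where P: "\<And>k. P k \<in> A"
      "\<And>k z. z \<in> K \<Longrightarrow> cmod (f z - P k z) < min d (inverse (real (Suc k)))"
      by metis
    have "sup_on K (P k) \<le> sup_on K f + d" for k
    proof (rule sup_on_least[OF K(1)])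
      fix z assume z: "z \<in> K"
      have "cmod (P k z) \<le> cmod (f z) + cmod (f z - P k z)"
        using norm_triangle_sub[of "P k z" "f z"] by (simp add: norm_minus_commute)
      then show "cmod (P k z) \<le> sup_on K f + d"
        using sup_on_upper[OF K(2) z] P(2)[OF z, of k] by simp
    qed
    then have "\<forall>k. P k \<circ> w \<in> Mult F N \<and> mult_norm F N (P k \<circ> w) \<le> C * (sup_on K f + d)"
      using A P(1) C by (meson mult_left_mono order_trans)
    moreover have "((\<lambda>k. P k (w x)) \<longlonglongrightarrow> f (w x))" if "x \<in> X" for x
    proof -
      have "(\<lambda>k. P k (w x) - f (w x)) \<longlonglongrightarrow> 0"
        using P(2)[of "w x"] w that
        by (intro Lim_null_comparison[OF _ LIMSEQ_inverse_real_of_nat] always_eventually)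
          (auto simp: norm_minus_commute less_imp_le)
      then show ?thesis by (rule LIM_zero_cancel)
    qed
    ultimately show ?thesis
      using d s C by (intro Mult_tendsto_pointwise[OF nfs reg, where v = "\<lambda>k. P k \<circ> w"]) auto
  qed
  have "mult_norm F N (f \<circ> w) \<le> C * sup_on K f"
  proof (rule tendsto_le[OF trivial_limit_at_right_real])
    show "((\<lambda>d. C * (sup_on K f + d)) \<longlongrightarrow> C * sup_on K f) (at_right 0)"
      by (auto intro!: tendsto_eq_intros)
    show "eventually (\<lambda>d. mult_norm F N (f \<circ> w) \<le> C * (sup_on K f + d)) (at_right 0)"
      using near by (auto intro: eventually_mono[OF eventually_at_right_less])
  qed simp
  then show ?thesis using near[of 1] by simp
qed

lemma Mult_comp_H_inf_unit_ball:
  fixes w :: "'a \<Rightarrow> complex ^ 'n"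
  assumes nfs: "normed_fun_space X F N" and reg: "regular_fun_space F N"
    and Y: "Y \<noteq> {}" "bounded Y" and w: "w ` X \<subseteq> Y" and C: "0 \<le> C"
    and poly: "\<forall>p. polynomial_fun p \<longrightarrow>
                 p \<circ> w \<in> Mult F N \<and> mult_norm F N (p \<circ> w) \<le> C * sup_on (closure Y) p"
    and ball: "closure {restrict0 Y p | p. polynomial_fun p \<and> sup_on Y p < 1}
                 = {f \<in> H_inf Y. sup_on Y f \<le> 1}"
    and g: "g \<in> H_inf Y" "sup_on Y g \<le> 1"
  shows "g \<circ> w \<in> Mult F N \<and> mult_norm F N (g \<circ> w) \<le> C"
proof (rule Mult_comp_closure[OF nfs reg C])
  show "g \<in> closure {restrict0 Y p | p. polynomial_fun p \<and> sup_on Y p < 1}"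
    using ball g by simp
  show "\<forall>q\<in>{restrict0 Y p | p. polynomial_fun p \<and> sup_on Y p < 1}.
          q \<circ> w \<in> Mult F N \<and> mult_norm F N (q \<circ> w) \<le> C"
  proof safe
    fix p assume p: "polynomial_fun p" "sup_on Y p < 1"
    have "\<forall>x\<in>X. (restrict0 Y p \<circ> w) x = (p \<circ> w) x" using w by (auto simp: restrict0_def)
    note cong = Mult_cong_on[OF nfs this]
    have "sup_on (closure Y) p \<le> 1"
      using sup_on_closure_le[OF continuous_polynomial_fun bounded_polynomial_image Y(1)] p Y(2)
      by fastforce
    then have "C * sup_on (closure Y) p \<le> C" using C by (simp add: mult_left_le)
    then have "p \<circ> w \<in> Mult F N" "mult_norm F N (p \<circ> w) \<le> C"
      using poly p(1) by force+
    then show "restrict0 Y p \<circ> w \<in> Mult F N" "mult_norm F N (restrict0 Y p \<circ> w) \<le> C"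
      unfolding cong .
  qed
qed

lemma Mult_comp_H_inf:
  fixes w :: "'a \<Rightarrow> complex ^ 'n"
  assumes nfs: "normed_fun_space X F N" and reg: "regular_fun_space F N"
    and Y: "open Y" "Y \<noteq> {}" "bounded Y" and w: "w ` X \<subseteq> Y" and C: "0 \<le> C"
    and poly: "\<forall>p. polynomial_fun p \<longrightarrow>
                 p \<circ> w \<in> Mult F N \<and> mult_norm F N (p \<circ> w) \<le> C * sup_on (closure Y) p"
    and ball: "closure {restrict0 Y p | p. polynomial_fun p \<and> sup_on Y p < 1}
                 = {f \<in> H_inf Y. sup_on Y f \<le> 1}"
    and f: "holomorphic_n f Y" "bounded (f ` Y)"
  shows "f \<circ> w \<in> Mult F N \<and> mult_norm F N (f \<circ> w) \<le> C * sup_on Y f"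
proof -
  define s where "s = sup_on Y f"
  \<comment> \<open>If s = 0 then inverse s = 0 makes g = 0; f vanishes on Y, so f = s g on Y still holds.\<close>
  define g where "g = restrict0 Y (\<lambda>z. inverse (complex_of_real s) * f z)"
  have f_le: "cmod (f z) \<le> s" if "z \<in> Y" for z
    using sup_on_upper[OF f(2) that] unfolding s_def .
  have s: "0 \<le> s" unfolding s_def using sup_on_nonneg[OF f(2) Y(2)] .
  have g_le: "cmod (g z) \<le> 1" if "z \<in> Y" for z
  proof -
    have "cmod (g z) = cmod (f z) / s"
      using that s by (simp add: g_def restrict0_def norm_mult norm_inverse divide_inverse mult.commute)
    then show ?thesis using f_le[OF that] s by (cases "s = 0") (simp_all add: divide_le_eq_1)
  qed
  have "g \<in> H_inf Y"
    unfolding H_inf_def ext_on_def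
    using g_le holomorphic_n_restrict0[OF holomorphic_n_cmult[OF f(1)] Y(1)]
    by (auto simp: g_def restrict0_def bounded_iff)
  moreover have "sup_on Y g \<le> 1" using g_le Y(2) by (rule sup_on_least[rotated])
  ultimately have g_mult: "g \<circ> w \<in> Mult F N \<and> mult_norm F N (g \<circ> w) \<le> C"
    by (rule Mult_comp_H_inf_unit_ball[OF nfs reg Y(2,3) w C poly ball])
  have "\<forall>x\<in>X. (f \<circ> w) x = complex_of_real s * (g \<circ> w) x"
  proof
    fix x assume "x \<in> X"
    then have "w x \<in> Y" using w by blast
    then show "(f \<circ> w) x = complex_of_real s * (g \<circ> w) x"
      using f_le[of "w x"] by (cases "s = 0") (auto simp: g_def restrict0_def)
  qed
  note cong = Mult_cong_on[OF nfs this]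
  have "cmod (complex_of_real s) * mult_norm F N (g \<circ> w) \<le> C * s"
    using g_mult s by (simp add: mult.commute[of C] mult_left_mono)
  then show ?thesis
    using Mult_cmult[OF nfs conjunct1[OF g_mult], of "complex_of_real s"]
    unfolding cong s_def[symmetric] by linarith
qed

theorem proposition5p7:
  fixes X :: "'a set" and F :: "('a \<Rightarrow> complex) set" and N :: "('a \<Rightarrow> complex) \<Rightarrow> real"
    and w :: "'a \<Rightarrow> complex ^ 'n" and Y :: "(complex ^ 'n) set"
  assumes nfs: "normed_fun_space X F N"
    and indep: "one_independent X F"
    and reg: "regular_fun_space F N"
    and w_mult: "\<forall>i. (\<lambda>x. w x $ i) \<in> Mult F N"
    and Y_dom: "domain_n Y" and Y_bdd: "bounded Y"
    and dense: "\<forall>f. continuous_on (closure Y) f \<and> holomorphic_n f Y \<longrightarrow>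
                   (\<forall>\<epsilon>>0. \<exists>p. polynomial_fun p \<and> (\<forall>z\<in>closure Y. cmod (f z - p z) < \<epsilon>))"
    and ball: "closure {restrict0 Y p | p. polynomial_fun p \<and> sup_on Y p < 1}
                 = {f \<in> H_inf Y. sup_on Y f \<le> 1}"
    and w_range: "w ` X \<subseteq> closure Y"
    and C_poly: "\<forall>p. polynomial_fun p \<longrightarrow> (p \<circ> w) \<in> Mult F N"
    and C_bdd: "\<exists>C. \<forall>p. polynomial_fun p \<longrightarrow> mult_norm F N (p \<circ> w) \<le> C * sup_on (closure Y) p"
  shows "(\<exists>C. \<forall>f. continuous_on (closure Y) f \<and> holomorphic_n f Y \<longrightarrow>
            (f \<circ> w) \<in> Mult F N \<and> mult_norm F N (f \<circ> w) \<le> C * sup_on (closure Y) f)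
       \<and> (w ` X \<subseteq> Y \<longrightarrow>
            (\<exists>C. \<forall>f. holomorphic_n f Y \<and> bounded (f ` Y) \<longrightarrow>
              (f \<circ> w) \<in> Mult F N \<and> mult_norm F N (f \<circ> w) \<le> C * sup_on Y f))"
proof -
  have Y: "open Y" "Y \<noteq> {}" "closure Y \<noteq> {}" "compact (closure Y)"
    using Y_dom Y_bdd by (auto simp: domain_n_def compact_closure)
  obtain C where C: "0 \<le> C" and poly: "\<forall>p. polynomial_fun p \<longrightarrow>
      p \<circ> w \<in> Mult F N \<and> mult_norm F N (p \<circ> w) \<le> C * sup_on (closure Y) p"
    using polynomial_comp_bound_nonneg[OF Y_bdd Y(2) C_poly C_bdd] by blast
  have "f \<circ> w \<in> Mult F N \<and> mult_norm F N (f \<circ> w) \<le> C * sup_on (closure Y) f"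
    if f: "continuous_on (closure Y) f" "holomorphic_n f Y" for f
  proof (rule Mult_comp_uniform_limit[OF nfs reg Y(3) _ w_range C])
    show "bounded (f ` closure Y)"
      using compact_continuous_image[OF f(1) Y(4)] by (rule compact_imp_bounded)
    show "\<forall>p\<in>Collect polynomial_fun.
            p \<circ> w \<in> Mult F N \<and> mult_norm F N (p \<circ> w) \<le> C * sup_on (closure Y) p"
      using poly by blast
    show "\<forall>\<epsilon>>0. \<exists>p\<in>Collect polynomial_fun. \<forall>z\<in>closure Y. cmod (f z - p z) < \<epsilon>"
      using dense f by auto
  qed
  moreover have "f \<circ> w \<in> Mult F N \<and> mult_norm F N (f \<circ> w) \<le> C * sup_on Y f"
    if "w ` X \<subseteq> Y" "holomorphic_n f Y" "bounded (f ` Y)" for f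
    using Mult_comp_H_inf[OF nfs reg Y(1,2) Y_bdd that(1) C poly ball that(2,3)] .
  ultimately show ?thesis by blast
qed

end
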